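(* The Laurent polynomial $f_\lambda$ is nondegenerate relative to $\Delta(A)$: for every face $\sigma$ of $\Delta(A)$ not containing the origin, the Laurent polynomials $x_i\partial f^\sigma_\lambda/\partial x_i$, $i=1,\dots,n$, have no common zero in $\big(\overline{\mathbb C(\lambda)}^\times\big)^n$.
   Context: Let $A=\{\mathbf a_1,\dots,\mathbf a_m\}\subseteq\mathbb Z^n$ be linearly independent over $\mathbb R$, $\mathbf a_0\in\mathbb Z^n$, and $\ell_0,\dots,\ell_m$ positive integers with gcd $1$ such that $\ell_0\mathbf a_0=\sum_{j=1}^m\ell_j\mathbf a_j$ and $\ell_0=\sum_{j=1}^m\ell_j$. Let $f_\lambda=\sum_{j=1}^m\ell_jx^{\mathbf a_j}-\ell_0\lambda x^{\mathbf a_0}$, $\lambda$ an indeterminate, and $\overline{\mathbb C(\lambda)}$ an algebraic closure of $\mathbb C(\lambda)$. Let $\Delta(A)$ be the convex hull of $A\cup\{\mathbf 0\}$. For a face $\sigma$ of $\Delta(A)$ not containing $\mathbf a_0$ set $f^\sigma_\lambda=\sum_{\mathbf a_j\in\sigma}\ell_jx^{\mathbf a_j}$; for a face containing $\mathbf a_0$ set $f^\sigma_\lambda=f_\lambda$. *)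

theory Defs
  imports "HOL-Analysis.Analysis" "HOL-Algebra.Algebraic_Closure_Type"
begin

text \<open>The coefficient field: an algebraic closure of C(lambda), with lambda an indeterminate.
  C(lambda) is the fraction field of complex polynomials.\<close>
type_synonym Kbar = "complex poly fract alg_closure"

definition lam :: Kbar where
  "lam = to_ac (Fract [:0, 1:] 1)"

definition rvec :: "int ^ 'n \<Rightarrow> real ^ 'n" where
  "rvec a = (\<chi> i. real_of_int (a $ i))"

definition lmono :: "('n::finite \<Rightarrow> 'k::field) \<Rightarrow> int ^ 'n \<Rightarrow> 'k" where
  "lmono x a = (\<Prod>i\<in>UNIV. x i powi (a $ i))"

text \<open>Laurent polynomials in n variables over 'k, as finitely supported coefficient functions.\<close>
definition laurent_eval :: "(int ^ 'n \<Rightarrow> 'k::field) \<Rightarrow> ('n::finite \<Rightarrow> 'k) \<Rightarrow> 'k" where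
  "laurent_eval p x = (\<Sum>a\<in>{a. p a \<noteq> 0}. p a * lmono x a)"

definition euler_deriv :: "'n \<Rightarrow> (int ^ 'n \<Rightarrow> 'k::field) \<Rightarrow> (int ^ 'n \<Rightarrow> 'k)" where
  "euler_deriv i p = (\<lambda>a. of_int (a $ i) * p a)"

text \<open>Coefficients of f_lambda = sum_{j=1..m} l_j x^{a_j} - l_0 lambda x^{a_0}.\<close>
definition f_lam :: "nat \<Rightarrow> (nat \<Rightarrow> int ^ 'n) \<Rightarrow> (nat \<Rightarrow> nat) \<Rightarrow> int ^ 'n \<Rightarrow> Kbar" where
  "f_lam m a l = (\<lambda>b. (\<Sum>j\<in>{j\<in>{1..m}. a j = b}. of_nat (l j))
                      - (if a 0 = b then of_nat (l 0) * lam else 0))"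

definition f_face :: "nat \<Rightarrow> (nat \<Rightarrow> int ^ 'n) \<Rightarrow> (nat \<Rightarrow> nat) \<Rightarrow> (real ^ 'n) set
                      \<Rightarrow> int ^ 'n \<Rightarrow> Kbar" where
  "f_face m a l \<sigma> = (if rvec (a 0) \<in> \<sigma> then f_lam m a l
      else (\<lambda>b. \<Sum>j\<in>{j\<in>{1..m}. a j = b \<and> rvec (a j) \<in> \<sigma>}. of_nat (l j)))"

definition DeltaA :: "nat \<Rightarrow> (nat \<Rightarrow> int ^ 'n) \<Rightarrow> (real ^ 'n) set" where
  "DeltaA m a = convex hull (insert 0 (rvec ` a ` {1..m}))"

end

theory Submission
  imports Defs
begin

(*
  Write f^sigma = sum_j c_j x^(a_j). At a common zero x of the x_i df^sigma/dx_i on the torus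
  the vector identity sum_j c_j x^(a_j) a_j = 0 holds in K^n. Integer vectors that are independent
  over R are independent over Q, hence over every field of characteristic 0 (apply a Q-linear
  functional K -> Q).

  If a_0 is not in sigma, the exponents a_j occurring in f^sigma are independent, so every term
  l_j x^(a_j) vanishes, which is impossible on the torus; such a term exists because a nonempty face
  of Delta(A) avoiding the origin contains some a_j.
  If a_0 is in sigma, eliminating l_0 a_0 = sum_j l_j a_j leaves sum_j l_j (x^(a_j) - lambda x^(a_0)) a_j = 0,
  so x^(a_j) = lambda x^(a_0) for all j; raising to the powers l_j and multiplying gives
  lambda^(l_0) = 1, contradicting the transcendence of lambda.
*)

instance fract :: ("{idom,ring_char_0}") ring_char_0
  by standard (rule injI, simp add: of_nat_fract eq_fract)

instance fract :: ("{idom,ring_char_0}") field_char_0 ..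

text \<open>Coefficients of \<open>\<Sum>j\<in>J. c j x^(a j)\<close>; the exponents \<open>a j\<close> need not be distinct.\<close>
definition laurent_of :: "'j set \<Rightarrow> ('j \<Rightarrow> 'k::field) \<Rightarrow> ('j \<Rightarrow> int ^ 'n) \<Rightarrow> int ^ 'n \<Rightarrow> 'k" where
  "laurent_of J c a = (\<lambda>b. \<Sum>j\<in>{j\<in>J. a j = b}. c j)"

definition torus_critical_point :: "(int ^ 'n \<Rightarrow> 'k::field) \<Rightarrow> ('n::finite \<Rightarrow> 'k) \<Rightarrow> bool" where
  "torus_critical_point p x \<longleftrightarrow> (\<forall>i. x i \<noteq> 0) \<and> (\<forall>i. laurent_eval (euler_deriv i p) x = 0)"

definition real_independent_on :: "'j set \<Rightarrow> ('j \<Rightarrow> int ^ 'n) \<Rightarrow> bool" where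
  "real_independent_on J a \<longleftrightarrow>
     (\<forall>c. (\<Sum>j\<in>J. c j *\<^sub>R rvec (a j)) = 0 \<longrightarrow> (\<forall>j\<in>J. c j = 0))"

lemma lmono_zero [simp]: "lmono x 0 = 1"
  unfolding lmono_def by simp

lemma lmono_add: "(\<forall>i. x i \<noteq> 0) \<Longrightarrow> lmono x (b + c) = lmono x b * lmono x c"
  unfolding lmono_def by (simp add: power_int_add prod.distrib)

lemma lmono_nonzero: "(\<forall>i. x i \<noteq> 0) \<Longrightarrow> lmono (x :: 'n::finite \<Rightarrow> 'k::field) b \<noteq> 0"
  unfolding lmono_def by simp

lemma lmono_of_nat_scale:
  assumes "\<forall>i. x i \<noteq> 0"
  shows "lmono x (of_nat k *s b) = lmono x b ^ k"
proof (induction k)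
  case 0
  have "(of_nat 0 :: int) *s b = 0" by (simp add: vec_eq_iff)
  then show ?case by simp
next
  case (Suc k)
  have "(of_nat (Suc k) :: int) *s b = b + of_nat k *s b" by (simp add: vec_eq_iff algebra_simps)
  then show ?case using Suc lmono_add[OF assms] by simp
qed

lemma lmono_sum:
  assumes "\<forall>i. x i \<noteq> 0" and "finite J"
  shows "lmono x (\<Sum>j\<in>J. f j) = (\<Prod>j\<in>J. lmono x (f j))"
  using assms(2) by (induction J rule: finite_induct) (simp_all add: lmono_add[OF assms(1)])

lemma laurent_eval_superset:
  assumes "finite T" "{b. p b \<noteq> 0} \<subseteq> T"
  shows "laurent_eval p x = (\<Sum>b\<in>T. p b * lmono x b)"
  unfolding laurent_eval_def by (rule sum.mono_neutral_left) (use assms in auto)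

lemma laurent_of_eq_0: "b \<notin> a ` J \<Longrightarrow> laurent_of J c a b = 0"
proof -
  assume "b \<notin> a ` J"
  then have "{j\<in>J. a j = b} = {}"
    by auto
  then show ?thesis
    unfolding laurent_of_def by (metis sum.empty)
qed

lemma laurent_eval_euler_deriv_laurent_of:
  fixes a :: "'j \<Rightarrow> int ^ 'n"
  assumes "finite J"
  shows "laurent_eval (euler_deriv i (laurent_of J c a)) x
           = (\<Sum>j\<in>J. c j * lmono x (a j) * of_int (a j $ i))"
proof -
  have "laurent_eval (euler_deriv i (laurent_of J c a)) x
          = (\<Sum>b\<in>a ` J. euler_deriv i (laurent_of J c a) b * lmono x b)"
    using assms laurent_of_eq_0[of _ a J c]
    by (intro laurent_eval_superset) (auto simp: euler_deriv_def)
  also have "\<dots> = (\<Sum>b\<in>a ` J. \<Sum>j\<in>{j\<in>J. a j = b}. c j * lmono x (a j) * of_int (a j $ i))"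
  proof (rule sum.cong[OF refl])
    fix b
    have "euler_deriv i (laurent_of J c a) b * lmono x b
            = (\<Sum>j\<in>{j\<in>J. a j = b}. c j * lmono x b * of_int (b $ i))"
      by (simp add: euler_deriv_def laurent_of_def sum_distrib_left sum_distrib_right mult_ac)
    also have "\<dots> = (\<Sum>j\<in>{j\<in>J. a j = b}. c j * lmono x (a j) * of_int (a j $ i))"
      by (rule sum.cong) simp_all
    finally show "euler_deriv i (laurent_of J c a) b * lmono x b
            = (\<Sum>j\<in>{j\<in>J. a j = b}. c j * lmono x (a j) * of_int (a j $ i))" .
  qed
  also have "\<dots> = (\<Sum>j\<in>J. c j * lmono x (a j) * of_int (a j $ i))"
    by (rule sum.group) (use assms in auto)
  finally show ?thesis .
qed

lemma real_independent_on_subset: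
  fixes a :: "'j \<Rightarrow> int ^ 'n"
  assumes "real_independent_on I a" "J \<subseteq> I" "finite I"
  shows "real_independent_on J a"
  unfolding real_independent_on_def
proof (intro allI impI ballI)
  fix c :: "'j \<Rightarrow> real" and j
  assume c: "(\<Sum>j\<in>J. c j *\<^sub>R rvec (a j)) = 0" and "j \<in> J"
  define c' where "c' j = (if j \<in> J then c j else 0)" for j
  have "(\<Sum>j\<in>I. c' j *\<^sub>R rvec (a j)) = (\<Sum>j\<in>J. c j *\<^sub>R rvec (a j))"
    using assms(2,3) by (intro sum.mono_neutral_cong_right) (auto simp: c'_def)
  then have "(\<Sum>j\<in>I. c' j *\<^sub>R rvec (a j)) = 0"
    using c by simp
  then have "\<forall>j\<in>I. c' j = 0"
    using assms(1) unfolding real_independent_on_def by blast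
  then have "c' j = 0"
    using \<open>j \<in> J\<close> assms(2) by blast
  then show "c j = 0"
    using \<open>j \<in> J\<close> by (simp add: c'_def)
qed

lemma real_independent_on_char_0:
  fixes c :: "'j \<Rightarrow> 'k::field_char_0" and a :: "'j \<Rightarrow> int ^ 'n"
  assumes "finite J" "real_independent_on J a"
    and "\<And>i. (\<Sum>j\<in>J. c j * of_int (a j $ i)) = 0"
    and "k \<in> J"
  shows "c k = 0"
proof (rule ccontr)
  assume "c k \<noteq> 0"
  interpret V: vector_space "\<lambda>(q::rat) (y::'k). of_rat q * y"
    by unfold_locales (auto simp: algebra_simps of_rat_add of_rat_mult)
  interpret Q: vector_space "(*) :: rat \<Rightarrow> rat \<Rightarrow> rat"
    by unfold_locales (auto simp: algebra_simps)
  interpret P: vector_space_pair "\<lambda>(q::rat) (y::'k). of_rat q * y" "(*) :: rat \<Rightarrow> rat \<Rightarrow> rat"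
    by unfold_locales
  have "V.independent {c k}"
    using \<open>c k \<noteq> 0\<close> by (simp add: V.independent_insert V.span_empty)
  then obtain g where g: "Vector_Spaces.linear (\<lambda>q y. of_rat q * y) (*) g" "g (c k) = 1"
    using P.linear_independent_extend[of "{c k}" "\<lambda>_. 1"] by auto
  have g_int: "g (y * of_int n) = of_int n * g y" for y n
    by (metis P.linear_scale[OF g(1)] mult.commute of_rat_of_int_eq)
  define r where "r j = real_of_rat (g (c j))" for j
  have "(\<Sum>j\<in>J. r j *\<^sub>R rvec (a j)) = 0"
  proof (rule vec_eq_iff[THEN iffD2], rule allI)
    fix i
    have "(\<Sum>j\<in>J. r j *\<^sub>R rvec (a j)) $ i = real_of_rat (\<Sum>j\<in>J. g (c j * of_int (a j $ i)))"
      by (simp add: r_def rvec_def g_int of_rat_sum of_rat_mult mult.commute)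
    also have "\<dots> = real_of_rat (g (\<Sum>j\<in>J. c j * of_int (a j $ i)))"
      by (metis P.linear_sum[OF g(1)])
    also have "\<dots> = 0"
      using assms(3) P.linear_0[OF g(1)] by simp
    finally show "(\<Sum>j\<in>J. r j *\<^sub>R rvec (a j)) $ i = 0 $ i" by simp
  qed
  then have "r k = 0"
    using assms(2,4) unfolding real_independent_on_def by blast
  then show False
    using g(2) by (simp add: r_def)
qed

lemma no_torus_critical_point_independent:
  fixes c :: "'j \<Rightarrow> 'k::field_char_0" and a :: "'j \<Rightarrow> int ^ 'n"
  assumes "finite J" "real_independent_on J a" "k \<in> J" "c k \<noteq> 0"
  shows "\<not> torus_critical_point (laurent_of J c a) x"
proof
  assume crit: "torus_critical_point (laurent_of J c a) x"
  then have "(\<Sum>j\<in>J. c j * lmono x (a j) * of_int (a j $ i)) = 0" for i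
    using assms(1) by (simp add: torus_critical_point_def laurent_eval_euler_deriv_laurent_of)
  then have "c k * lmono x (a k) = 0"
    by (rule real_independent_on_char_0[OF assms(1,2) _ assms(3)])
  then show False
    using crit assms(4) lmono_nonzero by (auto simp: torus_critical_point_def)
qed

lemma fract_power: "Fract (p :: 'a::idom) 1 ^ k = Fract (p ^ k) 1"
  by (induction k) (simp_all add: One_fract_def)

lemma lam_power_eq_1_iff: "lam ^ k = 1 \<longleftrightarrow> k = 0"
proof
  assume "lam ^ k = 1"
  moreover have "lam ^ k = to_ac (Fract ([:0, 1:] ^ k :: complex poly) 1)"
    by (simp only: lam_def to_ac_power[symmetric] fract_power)
  ultimately have "Fract ([:0, 1:] ^ k :: complex poly) 1 = Fract 1 1"
    by (metis One_fract_def to_ac_1 to_ac_eq_iff)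
  then have "Polynomial.degree ([:0, 1:] ^ k :: complex poly) = 0"
    by (simp add: eq_fract)
  then show "k = 0"
    by (simp add: degree_power_eq)
qed simp

lemma f_lam_eq_laurent_of:
  "f_lam m a l = laurent_of {0..m} (\<lambda>j. if j = 0 then - of_nat (l 0) * lam else of_nat (l j)) a"
proof
  fix b
  let ?c = "\<lambda>j. if j = 0 then - of_nat (l 0) * lam else of_nat (l j)"
  have "{j\<in>{0..m}. a j = b} = (if a 0 = b then insert 0 else id) {j\<in>{1..m}. a j = b}"
    by (cases "a 0 = b") (auto simp: Suc_le_eq intro: gr0I)
  moreover have "(\<Sum>j\<in>{j\<in>{1..m}. a j = b}. ?c j) = (\<Sum>j\<in>{j\<in>{1..m}. a j = b}. of_nat (l j))"
    by (rule sum.cong) auto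
  moreover have "finite {j\<in>{1..m}. a j = b}" "0 \<notin> {j\<in>{1..m}. a j = b}"
    by auto
  ultimately show "f_lam m a l b = laurent_of {0..m} ?c a b"
    by (cases "a 0 = b") (simp_all add: f_lam_def laurent_of_def)
qed

lemma f_face_eq_laurent_of:
  "rvec (a 0) \<notin> \<sigma> \<Longrightarrow>
     f_face m a l \<sigma> = laurent_of {j\<in>{1..m}. rvec (a j) \<in> \<sigma>} (\<lambda>j. of_nat (l j)) a"
  by (simp add: f_face_def laurent_of_def fun_eq_iff conj_ac)

lemma torus_critical_point_f_lam_monomials:
  fixes a :: "nat \<Rightarrow> int ^ 'n"
  assumes crit: "torus_critical_point (f_lam m a l) x"
    and indep: "real_independent_on {1..m} a"
    and lpos: "\<forall>j\<in>{0..m}. l j > 0"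
    and rel: "of_nat (l 0) *s a 0 = (\<Sum>j\<in>{1..m}. of_nat (l j) *s a j)"
    and j: "j \<in> {1..m}"
  shows "lmono x (a j) = lam * lmono x (a 0)"
proof -
  define Y where "Y = lmono x"
  let ?c = "\<lambda>j. if j = 0 then - of_nat (l 0) * lam else of_nat (l j)"
  have "(\<Sum>k\<in>{1..m}. (of_nat (l k) * (Y (a k) - lam * Y (a 0))) * of_int (a k $ i)) = 0" for i
  proof -
    have rel_i: "of_nat (l 0) * of_int (a 0 $ i) = (\<Sum>k\<in>{1..m}. of_nat (l k) * of_int (a k $ i) :: Kbar)"
      using arg_cong[OF rel, of "\<lambda>v. of_int (v $ i) :: Kbar"] by simp
    have "(\<Sum>k\<in>{1..m}. ?c k * Y (a k) * of_int (a k $ i))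
            = (\<Sum>k\<in>{1..m}. of_nat (l k) * Y (a k) * of_int (a k $ i))"
      by (rule sum.cong) auto
    moreover have "(\<Sum>k\<in>{0..m}. ?c k * Y (a k) * of_int (a k $ i)) = 0"
      using crit by (simp add: torus_critical_point_def f_lam_eq_laurent_of
          laurent_eval_euler_deriv_laurent_of Y_def)
    ultimately have "(\<Sum>k\<in>{1..m}. of_nat (l k) * Y (a k) * of_int (a k $ i))
                       = lam * Y (a 0) * (of_nat (l 0) * of_int (a 0 $ i))"
      by (simp add: sum.atLeast_Suc_atMost algebra_simps)
    then show ?thesis
      unfolding rel_i by (simp add: sum_distrib_left sum_subtractf algebra_simps)
  qed
  then have "of_nat (l j) * (Y (a j) - lam * Y (a 0)) = 0"
    by (rule real_independent_on_char_0[OF finite_atLeastAtMost indep _ j])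
  moreover have "l j > 0"
    using lpos j by auto
  ultimately show ?thesis
    by (simp add: Y_def)
qed

lemma no_torus_critical_point_f_lam:
  fixes a :: "nat \<Rightarrow> int ^ 'n"
  assumes indep: "real_independent_on {1..m} a"
    and lpos: "\<forall>j\<in>{0..m}. l j > 0"
    and rel: "of_nat (l 0) *s a 0 = (\<Sum>j\<in>{1..m}. of_nat (l j) *s a j)"
    and lsum: "l 0 = (\<Sum>j\<in>{1..m}. l j)"
  shows "\<not> torus_critical_point (f_lam m a l) x"
proof
  assume crit: "torus_critical_point (f_lam m a l) x"
  then have x: "\<forall>i. x i \<noteq> 0"
    by (simp add: torus_critical_point_def)
  define Y where "Y = lmono x"
  have "1 * Y (a 0) ^ l 0 = Y (of_nat (l 0) *s a 0)"
    by (simp add: Y_def lmono_of_nat_scale[OF x])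
  also have "\<dots> = (\<Prod>j\<in>{1..m}. Y (a j) ^ l j)"
    by (simp add: rel Y_def lmono_sum[OF x] lmono_of_nat_scale[OF x])
  also have "\<dots> = (\<Prod>j\<in>{1..m}. (lam * Y (a 0)) ^ l j)"
    using torus_critical_point_f_lam_monomials[OF crit indep lpos rel] by (simp add: Y_def)
  also have "\<dots> = lam ^ l 0 * Y (a 0) ^ l 0"
    by (simp add: lsum power_sum power_mult_distrib prod.distrib)
  finally have "lam ^ l 0 = 1"
    using lmono_nonzero[OF x] by (simp add: Y_def)
  then have "l 0 = 0"
    by (simp only: lam_power_eq_1_iff)
  moreover have "l 0 > 0"
    using lpos by auto
  ultimately show False
    by simp
qed

lemma face_of_convex_hull_meets:
  fixes P :: "'a::euclidean_space set"
  assumes "compact P" "F face_of convex hull P" "F \<noteq> {}"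
  shows "F \<inter> P \<noteq> {}"
proof -
  obtain S where "S \<subseteq> P" "F = convex hull S"
    using face_of_convex_hull_subset[OF assms(1,2)] by blast
  then show ?thesis
    using assms(3) hull_subset[of S convex] by auto
qed

theorem proposition5p1:
  fixes m :: nat and a :: "nat \<Rightarrow> int ^ 'n" and l :: "nat \<Rightarrow> nat"
  assumes indep: "inj_on a {1..m}"
      "\<And>c :: nat \<Rightarrow> real. (\<Sum>j\<in>{1..m}. c j *\<^sub>R rvec (a j)) = 0 \<Longrightarrow> \<forall>j\<in>{1..m}. c j = 0"
    and lpos: "\<forall>j\<in>{0..m}. l j > 0"
    and lgcd: "Gcd (l ` {0..m}) = 1"
    and rel: "of_nat (l 0) *s a 0 = (\<Sum>j\<in>{1..m}. of_nat (l j) *s a j)"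
    and lsum: "l 0 = (\<Sum>j\<in>{1..m}. l j)"
    and face: "\<sigma> face_of DeltaA m a" "\<sigma> \<noteq> {}" "0 \<notin> \<sigma>"
  shows "\<not> (\<exists>x :: 'n \<Rightarrow> Kbar. (\<forall>i. x i \<noteq> 0) \<and>
            (\<forall>i. laurent_eval (euler_deriv i (f_face m a l \<sigma>)) x = 0))"
proof
  assume "\<exists>x :: 'n \<Rightarrow> Kbar. (\<forall>i. x i \<noteq> 0) \<and>
            (\<forall>i. laurent_eval (euler_deriv i (f_face m a l \<sigma>)) x = 0)"
  then obtain x where crit: "torus_critical_point (f_face m a l \<sigma>) x"
    unfolding torus_critical_point_def by blast
  have indep_real: "real_independent_on {1..m} a"
    using indep(2) unfolding real_independent_on_def by blast
  show False
  proof (cases "rvec (a 0) \<in> \<sigma>")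
    case True
    then show False
      using crit no_torus_critical_point_f_lam[OF indep_real lpos rel lsum] by (simp add: f_face_def)
  next
    case False
    have "\<sigma> \<inter> insert 0 (rvec ` a ` {1..m}) \<noteq> {}"
      using face(1,2) by (intro face_of_convex_hull_meets) (simp_all add: DeltaA_def finite_imp_compact)
    then obtain j where j: "j \<in> {1..m}" "rvec (a j) \<in> \<sigma>"
      using face(3) by blast
    have "real_independent_on {j\<in>{1..m}. rvec (a j) \<in> \<sigma>} a"
      using indep_real by (rule real_independent_on_subset) auto
    then show False
      using no_torus_critical_point_independent[of _ a j "\<lambda>j. of_nat (l j)" x] crit False j lpos
      by (simp add: f_face_eq_laurent_of)
  qed
qed

end
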